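(* Let $X_1,\dots,X_n$ be i.i.d. $\mathrm{ECR}(\beta,\lambda)$, let $X_{i:n}$ ($1\le i\le n$) be the $i$-th order statistic, and let $r\in(-2i\beta,1)$. Then $$\mathbb E(X_{i:n}^r)=\frac{\beta(\lambda\sqrt2)^r}{B(i,n-i+1)}\sum_{j=0}^{n-i}(-1)^j\binom{n-i}{j}B\!\left(1-r,\tfrac r2+(i+j)\beta\right){}_2F_1\!\left(-\tfrac r2,\tfrac r2+(i+j)\beta;\,1-\tfrac r2+(i+j)\beta;\,\tfrac12\right).$$
   Context: The exponentiated Cauchy–Rayleigh distribution $\mathrm{ECR}(\beta,\lambda)$, with shape parameter $\beta>0$ and scale parameter $\lambda>0$, is the distribution on $(0,\infty)$ with cdf $F(x)=\left(1-\frac{\lambda}{\sqrt{\lambda^2+x^2}}\right)^{\beta}$ for $x>0$. $B(\cdot,\cdot)$ is the beta function and ${}_2F_1(a,b;c;z)=\sum_{k\ge0}\frac{(a)_k(b)_k}{(c)_k}\frac{z^k}{k!}$ the Gauss hypergeometric function. *)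

theory Defs
  imports "HOL-Probability.Probability"
begin

definition ecr_cdf :: "real \<Rightarrow> real \<Rightarrow> real \<Rightarrow> real" where
  "ecr_cdf \<beta> lam x = (if x \<le> 0 then 0 else (1 - lam / sqrt (lam\<^sup>2 + x\<^sup>2)) powr \<beta>)"

definition hyp2F1 :: "real \<Rightarrow> real \<Rightarrow> real \<Rightarrow> real \<Rightarrow> real" where
  "hyp2F1 a b c z = (\<Sum>k. pochhammer a k * pochhammer b k / pochhammer c k * z ^ k / fact k)"

definition order_stat :: "nat \<Rightarrow> nat \<Rightarrow> (nat \<Rightarrow> real) \<Rightarrow> real" where
  "order_stat n i x = sort (map x [1..<n+1]) ! (i - 1)"

end

theory Submission
  imports Defs
begin

(* Counting how many X_k fall below t gives P(X_{i:n} <= t) = H(F(t)) with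
   H(p) = sum_{k >= i} C(n,k) p^k (1 - p)^(n - k).  As F = G^beta for the Cauchy-Rayleigh cdf
   G(t) = 1 - lam / sqrt(lam^2 + t^2), whose inverse on (0,1) is Q(v) = lam sqrt(v (2 - v)) / (1 - v),
   H o F is also the cdf of Q(V) for V with density d/dv H(v^beta)
   = beta v^(i beta - 1) (1 - v^beta)^(n - i) / B(i, n - i + 1) on (0,1).  A real distribution is
   determined by its cdf, so E(X_{i:n}^r) = E(Q(V)^r).  Expanding (1 - v^beta)^(n - i) and writing
   Q(v)^r = (lam sqrt 2)^r v^(r/2) (1 - v)^(-r) (1 - v/2)^(r/2), every summand is an Euler integral
   int_0^1 v^(b-1) (1 - v)^(a-1) (1 - z v)^s dv = B(b,a) 2F1(-s, b; a + b; z), which follows by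
   integrating the binomial series of (1 - z v)^s term by term. *)

lemma summable_abs_gbinomial_power:
  fixes s z :: real
  assumes "\<bar>z\<bar> < 1"
  shows "summable (\<lambda>k. \<bar>s gchoose k\<bar> * \<bar>z\<bar> ^ k)"
proof -
  define x where "x = (1 + \<bar>z\<bar>) / 2"
  have x: "\<bar>x\<bar> < 1" "norm z < norm x" using assms by (auto simp: x_def)
  have "summable (\<lambda>k. (s gchoose k) * x ^ k)"
    using gen_binomial_real[OF x(1)] by (rule sums_summable)
  from powser_insidea[OF this x(2)] show ?thesis
    by (simp add: abs_mult power_abs)
qed

lemma Beta_add_of_nat:
  fixes a b :: real
  assumes a: "0 < a" and b: "0 < b"
  shows "Beta (b + real k) a = Beta b a * pochhammer b k / pochhammer (a + b) k"
proof -
  have "pochhammer b k = Gamma (b + real k) / Gamma b"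
    by (rule pochhammer_Gamma) (use b in \<open>auto elim!: nonpos_Ints_cases\<close>)
  moreover have "pochhammer (a + b) k = Gamma (a + b + real k) / Gamma (a + b)"
    by (rule pochhammer_Gamma) (use a b in \<open>auto elim!: nonpos_Ints_cases\<close>)
  moreover have "Gamma b > 0" "Gamma (a + b) > 0" "pochhammer (a + b) k > 0"
    using a b by (auto intro!: pochhammer_pos)
  ultimately show ?thesis
    by (simp add: Beta_def field_simps)
qed

lemma Beta_integral_lborel:
  fixes a b :: real
  assumes a: "0 < a" and b: "0 < b"
  shows "integrable lborel (\<lambda>v. indicator {0<..<1} v * (v powr (b - 1) * (1 - v) powr (a - 1)))"
    and "(\<integral>v. indicator {0<..<1} v * (v powr (b - 1) * (1 - v) powr (a - 1)) \<partial>lborel) = Beta b a"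
proof -
  let ?g = "\<lambda>v::real. indicator {0<..<1} v * (v powr (b - 1) * (1 - v) powr (a - 1))"
  have "((\<lambda>v. v powr (b - 1) * (1 - v) powr (a - 1)) has_integral Beta b a) {0<..<1}"
    using has_integral_Beta_real[OF b a] by (simp add: has_integral_Icc_iff_Ioo)
  then have "((\<lambda>v. if v \<in> {0<..<1} then v powr (b - 1) * (1 - v) powr (a - 1) else 0)
      has_integral Beta b a) UNIV"
    by (simp only: has_integral_restrict_UNIV)
  then have "(?g has_integral Beta b a) UNIV"
    by (rule has_integral_eq[rotated]) simp
  then have "integral\<^sup>N lborel ?g = Beta b a"
    by (intro nn_integral_has_integral_lborel) (auto simp: indicator_def)
  moreover have "Beta b a \<ge> 0"
    using a b by (simp add: Beta_def)
  ultimately show "integrable lborel ?g" "integral\<^sup>L lborel ?g = Beta b a"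
    using nn_integral_eq_integrable[of ?g lborel "Beta b a"] by (auto simp: indicator_def)
qed

lemma powr_add_of_nat: "0 < v \<Longrightarrow> v powr (b + real k - 1) = v powr (b - 1) * v ^ k"
  for v b :: real
  by (simp add: powr_add[symmetric] powr_realpow[symmetric] algebra_simps)

lemma Euler_integrand_sums:
  fixes a b s z v :: real
  assumes "\<bar>z\<bar> < 1"
  shows "(\<lambda>k. (s gchoose k) * (-z) ^ k * (indicator {0<..<1} v * (v powr (b + real k - 1) * (1 - v) powr (a - 1))))
    sums (indicator {0<..<1} v * (v powr (b - 1) * (1 - v) powr (a - 1) * (1 - z * v) powr s))"
proof (cases "v \<in> {0<..<1}")
  case True
  have "(\<lambda>k. (s gchoose k) * (-z * v) ^ k) sums (1 + (-z * v)) powr s"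
    using True assms by (intro gen_binomial_real) (auto simp: abs_mult intro: le_less_trans[OF mult_left_le])
  from sums_mult[OF this, of "v powr (b - 1) * (1 - v) powr (a - 1)"] show ?thesis
    using True unfolding power_mult_distrib by (simp add: powr_add_of_nat mult_ac)
qed simp

lemma gbinomial_Beta_eq_hyp2F1_term:
  fixes a b s z :: real
  assumes "0 < a" "0 < b"
  shows "(s gchoose k) * (-z) ^ k * Beta (b + real k) a
    = Beta b a * (pochhammer (-s) k * pochhammer b k / pochhammer (a + b) k * z ^ k / fact k)"
proof -
  have "(s gchoose k) * (-z) ^ k = ((-1) ^ k * (-1) ^ k) * pochhammer (-s) k * z ^ k / fact k"
    by (simp add: gbinomial_pochhammer power_minus[of z])
  also have "(-1) ^ k * (-1) ^ k = (1::real)"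
    by (simp flip: power_mult_distrib)
  finally show ?thesis
    by (simp add: Beta_add_of_nat[OF assms] mult_ac)
qed

lemma hyp2F1_Euler_integral:
  fixes a b s z :: real
  assumes a: "0 < a" and b: "0 < b" and z: "\<bar>z\<bar> < 1"
  defines "F \<equiv> \<lambda>v. indicator {0<..<1} v * (v powr (b - 1) * (1 - v) powr (a - 1) * (1 - z * v) powr s)"
  shows "integrable lborel F" and "integral\<^sup>L lborel F = Beta b a * hyp2F1 (-s) b (a + b) z"
proof -
  define g where "g = (\<lambda>(k::nat) v. indicator {0<..<1} v * (v powr (b + real k - 1) * (1 - v) powr (a - 1)))"
  define f where "f = (\<lambda>k v. (s gchoose k) * (-z) ^ k * g k v)"
  have g_int: "integrable lborel (g k)" "integral\<^sup>L lborel (g k) = Beta (b + real k) a" for k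
    using Beta_integral_lborel[OF a, of "b + real k"] b by (simp_all add: g_def)
  have f_int: "integrable lborel (f k)" for k
    using g_int(1) by (simp add: f_def)
  have norm_f: "norm (f k v) = \<bar>s gchoose k\<bar> * \<bar>z\<bar> ^ k * g k v" for k v
    by (simp add: f_def g_def abs_mult power_abs indicator_def)
  have F_eq: "F = (\<lambda>v. \<Sum>k. f k v)"
    using Euler_integrand_sums[OF z] by (auto simp: F_def f_def g_def sums_iff)
  have "summable (\<lambda>k. norm (f k v))" for v
  proof (rule summable_comparison_test'[OF summable_mult2[OF summable_abs_gbinomial_power[OF z]]])
    show "norm (norm (f k v)) \<le> \<bar>s gchoose k\<bar> * \<bar>z\<bar> ^ k * g 0 v" for k
      unfolding norm_f
      by (auto simp: g_def powr_add_of_nat indicator_def mult_left_le power_le_one intro!: mult_left_mono)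
  qed
  then have summable_f: "AE v in lborel. summable (\<lambda>k. norm (f k v))"
    by simp
  have "summable (\<lambda>k. \<integral>v. norm (f k v) \<partial>lborel)"
  proof (rule summable_comparison_test'[OF summable_mult2[OF summable_abs_gbinomial_power[OF z]]])
    fix k
    have "(\<integral>v. norm (f k v) \<partial>lborel) = \<bar>s gchoose k\<bar> * \<bar>z\<bar> ^ k * Beta (b + real k) a"
      unfolding norm_f using g_int by simp
    moreover have "0 \<le> Beta (b + real k) a" "Beta (b + real k) a \<le> Beta b a"
      using Beta_real_mono[of b "b + real k" a a] a b by (simp_all add: Beta_def)
    ultimately show "norm (\<integral>v. norm (f k v) \<partial>lborel) \<le> \<bar>s gchoose k\<bar> * \<bar>z\<bar> ^ k * Beta b a"
      by (simp add: mult_left_mono)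
  qed
  note termwise = integrable_suminf[OF f_int summable_f this] sums_integral[OF f_int summable_f this]
  show "integrable lborel F"
    unfolding F_eq by (rule termwise(1))
  define t where "t = (\<lambda>k. pochhammer (-s) k * pochhammer b k / pochhammer (a + b) k * z ^ k / fact k)"
  have "(\<lambda>k. Beta b a * t k) sums integral\<^sup>L lborel F"
    using termwise(2) g_int(2) gbinomial_Beta_eq_hyp2F1_term[OF a b] by (simp add: F_eq f_def t_def)
  moreover have "Beta b a \<noteq> 0"
    using a b by (simp add: Beta_def less_imp_neq[symmetric])
  ultimately have "t sums (integral\<^sup>L lborel F / Beta b a)"
    using sums_divide[of "\<lambda>k. Beta b a * t k" _ "Beta b a"] by simp
  then show "integral\<^sup>L lborel F = Beta b a * hyp2F1 (-s) b (a + b) z"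
    using \<open>Beta b a \<noteq> 0\<close> by (simp add: hyp2F1_def t_def sums_iff)
qed

definition binomial_tail :: "nat \<Rightarrow> nat \<Rightarrow> real \<Rightarrow> real" where
  "binomial_tail n i p = (\<Sum>k = i..n. real (n choose k) * p ^ k * (1 - p) ^ (n - k))"

lemma Beta_of_nat_binomial:
  assumes "1 \<le> i" "i \<le> n"
  shows "Beta (real i) (real (n - i + 1)) = 1 / (real n * real ((n - 1) choose (i - 1)))"
proof -
  have "Beta (real i) (real (n - i + 1)) = fact (i - 1) * fact (n - i) / fact n"
    using assms Gamma_fact[of "i - 1", where 'a = real] Gamma_fact[of "n - i", where 'a = real]
      Gamma_fact[of n, where 'a = real]
    by (simp add: Beta_def add.commute)
  moreover have "real n * real ((n - 1) choose (i - 1)) = fact n / (fact (i - 1) * fact (n - i))"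
    using assms by (simp add: binomial_fact fact_reduce[of n] diff_diff_eq)
  ultimately show ?thesis
    by (simp only:) simp
qed

lemma Beta_of_nat_pos: "1 \<le> i \<Longrightarrow> 0 < Beta (real i) (real (n - i + 1))"
  by (simp add: Beta_def)

lemma binomial_term_has_real_derivative:
  assumes "1 \<le> k" "k \<le> n"
  shows "((\<lambda>p. real (n choose k) * p ^ k * (1 - p) ^ (n - k)) has_real_derivative
    real n * (real ((n - 1) choose (k - 1)) * p ^ (k - 1) * (1 - p) ^ (n - k)
      - real ((n - 1) choose k) * p ^ k * (1 - p) ^ (n - 1 - k))) (at p)"
proof -
  have deriv: "((\<lambda>p. real (n choose k) * p ^ k * (1 - p) ^ (n - k)) has_real_derivative
      (real k * real (n choose k)) * p ^ (k - 1) * (1 - p) ^ (n - k)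
        - (real (n - k) * real (n choose k)) * p ^ k * (1 - p) ^ (n - k - 1)) (at p)"
    by (auto intro!: derivative_eq_intros simp: algebra_simps)
  have e1: "real k * real (n choose k) = real n * real ((n - 1) choose (k - 1))"
    using assms Suc_times_binomial[of "k - 1" "n - 1"] by (simp flip: of_nat_mult)
  have e2: "real (n - k) * real (n choose k) = real n * real ((n - 1) choose k)"
    using binomial_absorb_comp[of n k] by (simp flip: of_nat_mult)
  show ?thesis
    using deriv unfolding e1 e2 by (simp add: algebra_simps)
qed

lemma binomial_tail_has_real_derivative:
  assumes "1 \<le> i" "i \<le> n"
  shows "(binomial_tail n i has_real_derivative
    p ^ (i - 1) * (1 - p) ^ (n - i) / Beta (real i) (real (n - i + 1))) (at p)"
proof -
  define a where "a k = real n * real ((n - 1) choose k) * p ^ k * (1 - p) ^ (n - 1 - k)" for k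
  have "(binomial_tail n i has_real_derivative (\<Sum>k = i..n. a (k - 1) - a k)) (at p)"
    unfolding binomial_tail_def a_def
    by (rule DERIV_sum) (use assms binomial_term_has_real_derivative in \<open>auto simp: algebra_simps\<close>)
  moreover have "(\<Sum>k = i..n. a (k - 1) - a k) = a (i - 1) - a n"
    using sum_Suc_diff[of i n "\<lambda>k. - a (k - 1)"] assms by simp
  moreover have "a n = 0"
    using assms by (simp add: a_def)
  moreover have "a (i - 1) = p ^ (i - 1) * (1 - p) ^ (n - i) / Beta (real i) (real (n - i + 1))"
    unfolding a_def Beta_of_nat_binomial[OF assms] using assms by simp
  ultimately show ?thesis
    by simp
qed

lemma binomial_tail_0: "1 \<le> i \<Longrightarrow> binomial_tail n i 0 = 0"
  by (simp add: binomial_tail_def)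

lemma binomial_tail_1:
  assumes "i \<le> n"
  shows "binomial_tail n i 1 = 1"
proof -
  have "binomial_tail n i 1 = (\<Sum>k = i..n. if k = n then 1 else 0)"
    unfolding binomial_tail_def by (intro sum.cong) auto
  then show ?thesis
    using assms by simp
qed

lemma binomial_tail_nonneg: "0 \<le> p \<Longrightarrow> p \<le> 1 \<Longrightarrow> 0 \<le> binomial_tail n i p"
  by (simp add: binomial_tail_def sum_nonneg)

lemma sorted_nth_le_iff_card:
  fixes s :: "'a::linorder list"
  assumes "sorted s" "j < length s"
  shows "s ! j \<le> t \<longleftrightarrow> j < card {l. l < length s \<and> s ! l \<le> t}"
proof
  assume "s ! j \<le> t"
  then have "{0..j} \<subseteq> {l. l < length s \<and> s ! l \<le> t}"
    using assms by (auto intro: order_trans[OF sorted_nth_mono[OF assms(1)]])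
  from card_mono[OF _ this] show "j < card {l. l < length s \<and> s ! l \<le> t}"
    by simp
next
  assume "j < card {l. l < length s \<and> s ! l \<le> t}"
  moreover have "{l. l < length s \<and> s ! l \<le> t} \<subseteq> {0..<j}" if "t < s ! j"
  proof
    fix l assume l: "l \<in> {l. l < length s \<and> s ! l \<le> t}"
    show "l \<in> {0..<j}"
    proof (rule ccontr)
      assume "l \<notin> {0..<j}"
      then have "s ! j \<le> s ! l"
        using l assms(1) by (simp add: sorted_nth_mono)
      then have "s ! j \<le> t"
        using l by (blast intro: order.trans)
      then show False
        using that by simp
    qed
  qed
  ultimately show "s ! j \<le> t"
    using card_mono[of "{0..<j}"] by (auto simp flip: not_less)
qed

lemma order_stat_le_iff:
  fixes x :: "nat \<Rightarrow> real"
  assumes "1 \<le> i" "i \<le> n"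
  shows "order_stat n i x \<le> t \<longleftrightarrow> i \<le> card {k \<in> {1..n}. x k \<le> t}"
proof -
  define s where "s = sort (map x [1..<n+1])"
  have "card {k \<in> {1..n}. x k \<le> t} = length (filter (\<lambda>k. x k \<le> t) [1..<n+1])"
    by (subst distinct_length_filter) (auto intro: arg_cong[where f = card])
  also have "\<dots> = length (filter (\<lambda>y. y \<le> t) s)"
    by (simp add: s_def filter_sort filter_map o_def)
  also have "\<dots> = card {l. l < length s \<and> s ! l \<le> t}"
    by (simp add: length_filter_conv_card)
  finally have count: "card {k \<in> {1..n}. x k \<le> t} = card {l. l < length s \<and> s ! l \<le> t}" .
  have "length s = n" "sorted s" "order_stat n i x = s ! (i - 1)"
    by (simp_all add: s_def order_stat_def)
  then show ?thesis
    using sorted_nth_le_iff_card[of s "i - 1" t] assms unfolding count by auto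
qed

lemma order_stat_le_eq_UN:
  assumes "1 \<le> i" "i \<le> n"
  shows "{\<omega> \<in> \<Omega>. order_stat n i (\<lambda>k. X k \<omega>) \<le> t}
    = (\<Union>S \<in> {S. S \<subseteq> {1..n} \<and> i \<le> card S}. {\<omega> \<in> \<Omega>. {k \<in> {1..n}. X k \<omega> \<le> t} = S})"
  using assms by (auto simp: order_stat_le_iff)

lemma Collect_le_set_eq_sets:
  fixes X :: "nat \<Rightarrow> 'a \<Rightarrow> real"
  assumes "finite A" "\<And>k. k \<in> A \<Longrightarrow> X k \<in> borel_measurable M"
  shows "{\<omega> \<in> space M. {k \<in> A. X k \<omega> \<le> t} = S} \<in> sets M"
proof (cases "S \<subseteq> A")
  case True
  then have "{\<omega> \<in> space M. {k \<in> A. X k \<omega> \<le> t} = S}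
      = {\<omega> \<in> space M. (\<forall>k\<in>S. X k \<omega> \<le> t) \<and> (\<forall>k\<in>A - S. t < X k \<omega>)}"
    by (auto; meson DiffI not_le)
  also have "\<dots> \<in> sets M"
    using assms True by (measurable, auto intro: finite_subset)
  finally show ?thesis .
next
  case False
  then have "{\<omega> \<in> space M. {k \<in> A. X k \<omega> \<le> t} = S} = {}"
    by auto
  then show ?thesis
    by (simp only: sets.empty_sets)
qed

lemma measurable_order_stat:
  assumes "1 \<le> i" "i \<le> n" "\<And>k. k \<in> {1..n} \<Longrightarrow> X k \<in> borel_measurable M"
  shows "(\<lambda>\<omega>. order_stat n i (\<lambda>k. X k \<omega>)) \<in> borel_measurable M"
  unfolding borel_measurable_iff_le order_stat_le_eq_UN[OF assms(1,2)]
  by (intro allI sets.finite_UN ballI Collect_le_set_eq_sets assms(3))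
    (auto intro: finite_subset[of _ "Pow {1..n}"])

lemma (in prob_space) prob_Collect_le_set_eq:
  fixes X :: "nat \<Rightarrow> 'a \<Rightarrow> real"
  assumes indep: "indep_vars (\<lambda>_. borel) X A" and "finite A" "S \<subseteq> A"
    and p: "\<And>k. k \<in> A \<Longrightarrow> prob {\<omega> \<in> space M. X k \<omega> \<le> t} = p"
  shows "prob {\<omega> \<in> space M. {k \<in> A. X k \<omega> \<le> t} = S} = p ^ card S * (1 - p) ^ (card A - card S)"
proof (cases "A = {}")
  case False
  define B where "B k = (if k \<in> S then {..t} else {t<..})" for k
  have rv: "X k \<in> borel_measurable M" if "k \<in> A" for k
    using indep that by (simp add: indep_vars_def)
  have "X k \<omega> \<in> B k \<longleftrightarrow> (X k \<omega> \<le> t \<longleftrightarrow> k \<in> S)" for k \<omega>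
    by (auto simp: B_def)
  then have "{\<omega> \<in> space M. {k \<in> A. X k \<omega> \<le> t} = S} = (\<Inter>k\<in>A. X k -` B k \<inter> space M)"
    using \<open>S \<subseteq> A\<close> False by blast
  also have "prob \<dots> = (\<Prod>k\<in>A. prob (X k -` B k \<inter> space M))"
    by (rule indep_varsD[OF indep False \<open>finite A\<close>]) (auto simp: B_def)
  also have "\<dots> = (\<Prod>k\<in>A. if k \<in> S then p else 1 - p)"
  proof (rule prod.cong[OF refl])
    fix k assume "k \<in> A"
    then have "{\<omega> \<in> space M. X k \<omega> \<le> t} \<in> events"
      using rv by measurable
    moreover have "X k -` {..t} \<inter> space M = {\<omega> \<in> space M. X k \<omega> \<le> t}"
      and "X k -` {t<..} \<inter> space M = space M - {\<omega> \<in> space M. X k \<omega> \<le> t}"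
      by auto
    ultimately show "prob (X k -` B k \<inter> space M) = (if k \<in> S then p else 1 - p)"
      using p \<open>k \<in> A\<close> by (simp add: B_def prob_compl)
  qed
  also have "\<dots> = p ^ card S * (1 - p) ^ (card A - card S)"
    using \<open>S \<subseteq> A\<close> \<open>finite A\<close>
    by (simp add: prod.If_cases Int_absorb1 Diff_eq[symmetric] card_Diff_subset finite_subset)
  finally show ?thesis .
qed (use \<open>S \<subseteq> A\<close> in \<open>simp add: prob_space\<close>)

lemma (in prob_space) prob_order_stat_le:
  fixes X :: "nat \<Rightarrow> 'a \<Rightarrow> real"
  assumes i: "1 \<le> i" "i \<le> n" and indep: "indep_vars (\<lambda>_. borel) X {1..n}"
    and p: "\<And>k. k \<in> {1..n} \<Longrightarrow> prob {\<omega> \<in> space M. X k \<omega> \<le> t} = p"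
  shows "prob {\<omega> \<in> space M. order_stat n i (\<lambda>k. X k \<omega>) \<le> t} = binomial_tail n i p"
proof -
  define E where "E S = {\<omega> \<in> space M. {k \<in> {1..n}. X k \<omega> \<le> t} = S}" for S
  define \<S> where "\<S> = {S. S \<subseteq> {1..n} \<and> i \<le> card S}"
  have fin: "finite \<S>"
    unfolding \<S>_def by (auto intro: finite_subset[of _ "Pow {1..n}"])
  have "prob {\<omega> \<in> space M. order_stat n i (\<lambda>k. X k \<omega>) \<le> t} = prob (\<Union>S\<in>\<S>. E S)"
    by (simp add: order_stat_le_eq_UN[OF i] E_def \<S>_def)
  also have "\<dots> = (\<Sum>S\<in>\<S>. prob (E S))"
  proof (rule finite_measure_finite_Union[OF fin])
    have "X k \<in> borel_measurable M" if "k \<in> {1..n}" for k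
      using indep that by (simp add: indep_vars_def)
    then show "E ` \<S> \<subseteq> events"
      unfolding E_def using Collect_le_set_eq_sets[of "{1..n}" X M t] by blast
    show "disjoint_family_on E \<S>"
      by (auto simp: disjoint_family_on_def E_def)
  qed
  also have "\<dots> = (\<Sum>S\<in>\<S>. p ^ card S * (1 - p) ^ (n - card S))"
    using prob_Collect_le_set_eq[OF indep _ _ p] by (intro sum.cong) (auto simp: E_def \<S>_def)
  also have "\<dots> = (\<Sum>k = i..n. \<Sum>S | S \<in> \<S> \<and> card S = k. p ^ card S * (1 - p) ^ (n - card S))"
    by (rule sum.group[OF fin, symmetric]) (auto simp: \<S>_def dest: card_mono[rotated])
  also have "\<dots> = (\<Sum>k = i..n. \<Sum>S | S \<subseteq> {1..n} \<and> card S = k. p ^ k * (1 - p) ^ (n - k))"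
    by (intro sum.cong) (auto simp: \<S>_def intro: arg_cong[where f = card])
  also have "\<dots> = binomial_tail n i p"
    by (simp add: binomial_tail_def n_subsets mult.assoc)
  finally show ?thesis .
qed

definition cr_cdf :: "real \<Rightarrow> real \<Rightarrow> real" where
  "cr_cdf lam t = 1 - lam / sqrt (lam\<^sup>2 + t\<^sup>2)"

definition cr_quantile :: "real \<Rightarrow> real \<Rightarrow> real" where
  "cr_quantile lam v = lam * sqrt (v * (2 - v)) / (1 - v)"

lemma cr_cdf_bounds:
  assumes "0 < lam"
  shows "0 \<le> cr_cdf lam t" "cr_cdf lam t < 1"
proof -
  have "lam \<le> sqrt (lam\<^sup>2 + t\<^sup>2)"
    using assms by (intro real_le_rsqrt) simp
  moreover have "0 < sqrt (lam\<^sup>2 + t\<^sup>2)"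
    using assms by (simp add: add_pos_nonneg)
  ultimately show "0 \<le> cr_cdf lam t" "cr_cdf lam t < 1"
    using assms by (simp_all add: cr_cdf_def)
qed

lemma ecr_cdf_eq_cr_cdf:
  assumes "0 < lam"
  shows "ecr_cdf \<beta> lam t = cr_cdf lam (max t 0) powr \<beta>"
  using assms by (simp add: ecr_cdf_def cr_cdf_def max_def)

lemma cr_quantile_pos: "0 < lam \<Longrightarrow> 0 < v \<Longrightarrow> v < 1 \<Longrightarrow> 0 < cr_quantile lam v"
  by (simp add: cr_quantile_def)

lemma cr_quantile_le_iff:
  assumes lam: "0 < lam" and v: "0 < v" "v < 1" and t: "0 \<le> t"
  shows "cr_quantile lam v \<le> t \<longleftrightarrow> v \<le> cr_cdf lam t"
proof -
  define S where "S = sqrt (lam\<^sup>2 + t\<^sup>2)"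
  have S: "0 < S" "S\<^sup>2 = lam\<^sup>2 + t\<^sup>2"
    using lam by (simp_all add: S_def add_pos_nonneg)
  have "cr_quantile lam v \<le> t \<longleftrightarrow> lam * sqrt (v * (2 - v)) \<le> t * (1 - v)"
    using v by (simp add: cr_quantile_def divide_le_eq)
  also have "\<dots> \<longleftrightarrow> (lam * sqrt (v * (2 - v)))\<^sup>2 \<le> (t * (1 - v))\<^sup>2"
    using lam v t by (simp add: abs_le_square_iff[symmetric])
  also have "\<dots> \<longleftrightarrow> lam\<^sup>2 \<le> (S * (1 - v))\<^sup>2"
    using v unfolding power_mult_distrib S(2) by (simp add: algebra_simps power2_eq_square)
  also have "\<dots> \<longleftrightarrow> lam \<le> S * (1 - v)"
    using lam v S by (simp add: abs_le_square_iff[symmetric])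
  also have "\<dots> \<longleftrightarrow> lam / S \<le> 1 - v"
    using S by (simp add: pos_divide_le_eq mult.commute)
  also have "\<dots> \<longleftrightarrow> v \<le> cr_cdf lam t"
    by (auto simp: cr_cdf_def S_def)
  finally show ?thesis .
qed

lemma cr_quantile_powr:
  assumes "0 < lam" "0 < v" "v < 1"
  shows "cr_quantile lam v powr r
    = (lam * sqrt 2) powr r * (v powr (r / 2) * (1 - v) powr (- r) * (1 - v / 2) powr (r / 2))"
proof -
  have "(2 - v) powr (r / 2) = 2 powr (r / 2) * (1 - v / 2) powr (r / 2)"
    using assms by (simp add: powr_mult[symmetric] algebra_simps)
  then have "sqrt (v * (2 - v)) powr r = 2 powr (r / 2) * (v powr (r / 2) * (1 - v / 2) powr (r / 2))"
    using assms by (simp add: powr_half_sqrt[symmetric] powr_powr powr_mult)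
  moreover have "(lam * sqrt 2) powr r = lam powr r * 2 powr (r / 2)"
    using assms by (simp add: powr_mult powr_half_sqrt[symmetric] powr_powr)
  moreover have "cr_quantile lam v powr r = lam powr r * sqrt (v * (2 - v)) powr r * (1 - v) powr (- r)"
    using assms by (simp add: cr_quantile_def powr_divide powr_mult powr_minus_divide)
  ultimately show ?thesis
    by (simp add: mult_ac)
qed

definition power_order_density :: "real \<Rightarrow> nat \<Rightarrow> nat \<Rightarrow> real \<Rightarrow> real" where
  "power_order_density \<beta> n i v =
    (v powr \<beta>) ^ (i - 1) * (1 - v powr \<beta>) ^ (n - i) / Beta (real i) (real (n - i + 1))
      * (\<beta> * v powr (\<beta> - 1))"

lemma binomial_tail_powr_has_real_derivative:
  assumes "0 < \<beta>" "1 \<le> i" "i \<le> n" "0 < v"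
  shows "((\<lambda>v. binomial_tail n i (v powr \<beta>)) has_real_derivative power_order_density \<beta> n i v) (at v)"
proof -
  have "((\<lambda>v. v powr \<beta>) has_real_derivative \<beta> * v powr (\<beta> - 1)) (at v)"
    using assms by (auto intro!: derivative_eq_intros simp: powr_diff field_simps)
  from DERIV_chain2[OF binomial_tail_has_real_derivative[OF assms(2,3)] this] show ?thesis
    by (simp add: power_order_density_def)
qed

lemma power_order_density_nonneg:
  assumes "0 < \<beta>" "1 \<le> i" "0 < v" "v \<le> 1"
  shows "0 \<le> power_order_density \<beta> n i v"
proof -
  have "v powr \<beta> \<le> 1"
    using assms by (intro powr_le1) auto
  then show ?thesis
    using assms Beta_of_nat_pos[of i n] by (simp add: power_order_density_def)
qed

lemma isCont_power_order_density: "1 \<le> i \<Longrightarrow> 0 < v \<Longrightarrow> isCont (power_order_density \<beta> n i) v"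
  unfolding power_order_density_def using Beta_of_nat_pos[of i n]
  by (intro continuous_intros) auto

lemma power_order_density_integral:
  assumes \<beta>: "0 < \<beta>" and i: "1 \<le> i" "i \<le> n" and c: "0 < c" "c \<le> 1"
  shows "set_integrable lborel {0<..<c} (power_order_density \<beta> n i)"
    and "(LINT v:{0<..<c}|lborel. power_order_density \<beta> n i v) = binomial_tail n i (c powr \<beta>)"
proof -
  define H where "H v = binomial_tail n i (v powr \<beta>)" for v
  have cont_tail: "isCont (binomial_tail n i) p" for p
    using binomial_tail_has_real_derivative[OF i] by (rule DERIV_isCont)
  have "((\<lambda>v. v powr \<beta>) \<longlongrightarrow> 0) (at_right 0)"
    using \<beta> by (intro tendsto_zero_powrI[of _ _ _ \<beta>]) (auto simp: eventually_at_filter)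
  then have "(H \<longlongrightarrow> binomial_tail n i 0) (at_right 0)"
    unfolding H_def by (rule isCont_tendsto_compose[OF cont_tail])
  then have lim0: "((H \<circ> real_of_ereal) \<longlongrightarrow> 0) (at_right (ereal 0))"
    by (simp add: ereal_tendsto_simps1 binomial_tail_0[OF i(1)])
  have "isCont H c"
    unfolding H_def using c by (intro DERIV_isCont[OF binomial_tail_powr_has_real_derivative[OF \<beta> i]])
  then have limc: "((H \<circ> real_of_ereal) \<longlongrightarrow> H c) (at_left (ereal c))"
    by (simp add: ereal_tendsto_simps1 isCont_def filterlim_at_split)
  have nonneg: "AE v in lborel. ereal 0 < ereal v \<longrightarrow> ereal v < ereal c \<longrightarrow> 0 \<le> power_order_density \<beta> n i v"
    using c by (intro AE_I2) (auto intro: power_order_density_nonneg[OF \<beta> i(1)])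
  have pos: "ereal 0 < ereal c"
    using c by simp
  have deriv: "DERIV H v :> power_order_density \<beta> n i v" if "ereal 0 < ereal v" "ereal v < ereal c" for v
    using that unfolding H_def by (intro binomial_tail_powr_has_real_derivative \<beta> i) simp
  have cont: "isCont (power_order_density \<beta> n i) v" if "ereal 0 < ereal v" "ereal v < ereal c" for v
    using that i by (intro isCont_power_order_density) simp_all
  note FTC = interval_integral_FTC_nonneg[OF pos deriv cont nonneg lim0 limc]
  then show "set_integrable lborel {0<..<c} (power_order_density \<beta> n i)"
    and "(LINT v:{0<..<c}|lborel. power_order_density \<beta> n i v) = binomial_tail n i (c powr \<beta>)"
    using c by (simp_all add: interval_lebesgue_integral_def H_def)
qed

lemma borel_measurable_power_order_density[measurable]:
  "power_order_density \<beta> n i \<in> borel_measurable borel"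
  unfolding power_order_density_def by measurable

lemma borel_measurable_cr_quantile[measurable]: "cr_quantile lam \<in> borel_measurable borel"
  unfolding cr_quantile_def by measurable

lemma emeasure_density_power_order_density:
  assumes \<beta>: "0 < \<beta>" and i: "1 \<le> i" "i \<le> n" and c: "0 \<le> c" "c \<le> 1"
    and A: "A \<in> sets borel" "\<And>v. 0 < v \<Longrightarrow> v < 1 \<Longrightarrow> v \<in> A \<longleftrightarrow> v \<le> c"
  shows "emeasure (density lborel (\<lambda>v. indicator {0<..<1} v * power_order_density \<beta> n i v)) A
    = ennreal (binomial_tail n i (c powr \<beta>))"
proof -
  have "emeasure (density lborel (\<lambda>v. indicator {0<..<1} v * power_order_density \<beta> n i v)) A
      = (\<integral>\<^sup>+ v. ennreal (indicator {0<..<1} v * power_order_density \<beta> n i v) * indicator A v \<partial>lborel)"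
    by (rule emeasure_density) (use A(1) in simp_all)
  also have "\<dots> = (\<integral>\<^sup>+ v. ennreal (indicator {0<..<c} v * power_order_density \<beta> n i v) \<partial>lborel)"
    using AE_lborel_singleton[of c]
    by (rule nn_integral_cong_AE[OF eventually_mono]) (use A(2) c in \<open>auto simp: indicator_def\<close>)
  also have "\<dots> = ennreal (binomial_tail n i (c powr \<beta>))"
  proof (cases "c = 0")
    case False
    with c have c_pos: "0 < c"
      by simp
    have "integrable lborel (\<lambda>v. indicator {0<..<c} v * power_order_density \<beta> n i v)"
      using power_order_density_integral(1)[OF \<beta> i c_pos c(2)] by (simp add: set_integrable_def)
    then have "(\<integral>\<^sup>+ v. ennreal (indicator {0<..<c} v * power_order_density \<beta> n i v) \<partial>lborel)
        = ennreal (LINT v:{0<..<c}|lborel. power_order_density \<beta> n i v)"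
      unfolding set_lebesgue_integral_def using c
      by (subst nn_integral_eq_integral)
        (auto simp: indicator_def intro!: power_order_density_nonneg[OF \<beta> i(1)])
    then show ?thesis
      by (simp add: power_order_density_integral(2)[OF \<beta> i c_pos c(2)])
  qed (use \<beta> binomial_tail_0[OF i(1)] in simp)
  finally show ?thesis .
qed

definition ecr_order_distr :: "real \<Rightarrow> real \<Rightarrow> nat \<Rightarrow> nat \<Rightarrow> real measure" where
  "ecr_order_distr \<beta> lam n i =
    distr (density lborel (\<lambda>v. indicator {0<..<1} v * power_order_density \<beta> n i v)) borel (cr_quantile lam)"

lemma real_distribution_ecr_order_distr:
  assumes "0 < \<beta>" "1 \<le> i" "i \<le> n"
  shows "real_distribution (ecr_order_distr \<beta> lam n i)"
proof -
  have "emeasure (ecr_order_distr \<beta> lam n i) UNIV = 1"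
    using emeasure_density_power_order_density[OF assms, of 1 UNIV] binomial_tail_1[OF assms(3)]
    by (simp add: ecr_order_distr_def emeasure_distr)
  then show ?thesis
    by (auto simp: real_distribution_def real_distribution_axioms_def ecr_order_distr_def intro: prob_spaceI)
qed

lemma cdf_ecr_order_distr:
  assumes \<beta>: "0 < \<beta>" and i: "1 \<le> i" "i \<le> n" and lam: "0 < lam"
  shows "cdf (ecr_order_distr \<beta> lam n i) t = binomial_tail n i (ecr_cdf \<beta> lam t)"
proof -
  define c where "c = cr_cdf lam (max t 0)"
  have c: "0 \<le> c" "c \<le> 1"
    using cr_cdf_bounds[OF lam] by (auto simp: c_def less_imp_le)
  have "cr_quantile lam v \<le> t \<longleftrightarrow> v \<le> c" if "0 < v" "v < 1" for v
    using cr_quantile_le_iff[OF lam that, of "max t 0"] cr_quantile_pos[OF lam that]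
    by (auto simp: c_def max_def)
  moreover have "cr_quantile lam -` {..t} \<in> sets borel"
    using measurable_sets_borel[OF borel_measurable_cr_quantile] by simp
  ultimately have "emeasure (ecr_order_distr \<beta> lam n i) {..t} = ennreal (binomial_tail n i (c powr \<beta>))"
    unfolding ecr_order_distr_def
    by (subst emeasure_distr) (auto intro!: emeasure_density_power_order_density[OF \<beta> i c])
  moreover have "0 \<le> binomial_tail n i (c powr \<beta>)"
    using c \<beta> by (intro binomial_tail_nonneg powr_le1) auto
  ultimately show ?thesis
    by (simp add: cdf_def measure_def ecr_cdf_eq_cr_cdf[OF lam] c_def)
qed

lemma power_order_density_expansion:
  assumes i: "1 \<le> i" "i \<le> n" and v: "0 < v"
  shows "power_order_density \<beta> n i v = \<beta> / Beta (real i) (real (n - i + 1))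
    * (\<Sum>j = 0..n - i. (-1) ^ j * real ((n - i) choose j) * v powr (real (i + j) * \<beta> - 1))"
proof -
  have "(1 - v powr \<beta>) ^ (n - i) = (\<Sum>j\<le>n - i. real ((n - i) choose j) * (- (v powr \<beta>)) ^ j * 1 ^ (n - i - j))"
    using binomial_ring[of "- (v powr \<beta>)" 1 "n - i"] by simp
  also have "\<dots> = (\<Sum>j = 0..n - i. (-1) ^ j * real ((n - i) choose j) * (v powr \<beta>) ^ j)"
    unfolding atLeast0AtMost power_minus[of "v powr \<beta>"] by (simp add: mult_ac)
  finally have binomial: "(1 - v powr \<beta>) ^ (n - i) = \<dots>" .
  have powers: "(v powr \<beta>) ^ (i - 1) * v powr (\<beta> - 1) * (v powr \<beta>) ^ j = v powr (real (i + j) * \<beta> - 1)"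
    for j
  proof -
    have "(v powr \<beta>) ^ (i - 1) * v powr (\<beta> - 1) * (v powr \<beta>) ^ j
        = v powr (real (i - 1) * \<beta> + (\<beta> - 1) + real j * \<beta>)"
      using v by (simp add: powr_power powr_add)
    also have "real (i - 1) * \<beta> + (\<beta> - 1) + real j * \<beta> = real (i + j) * \<beta> - 1"
      using i by (simp add: algebra_simps)
    finally show ?thesis .
  qed
  have "power_order_density \<beta> n i v = \<beta> / Beta (real i) (real (n - i + 1))
      * ((v powr \<beta>) ^ (i - 1) * v powr (\<beta> - 1) * (1 - v powr \<beta>) ^ (n - i))"
    by (simp add: power_order_density_def)
  also have "\<dots> = \<beta> / Beta (real i) (real (n - i + 1)) * (\<Sum>j = 0..n - i. (-1) ^ j
      * real ((n - i) choose j) * ((v powr \<beta>) ^ (i - 1) * v powr (\<beta> - 1) * (v powr \<beta>) ^ j))"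
    unfolding binomial sum_distrib_left by (simp add: mult_ac)
  finally show ?thesis
    unfolding powers .
qed

lemma power_order_density_cr_quantile_powr:
  assumes lam: "0 < lam" and i: "1 \<le> i" "i \<le> n" and v: "0 < v" "v < 1"
  shows "power_order_density \<beta> n i v * cr_quantile lam v powr r
    = \<beta> * (lam * sqrt 2) powr r / Beta (real i) (real (n - i + 1))
      * (\<Sum>j = 0..n - i. (-1) ^ j * real ((n - i) choose j)
          * (v powr (r / 2 + real (i + j) * \<beta> - 1) * (1 - v) powr (- r) * (1 - v / 2) powr (r / 2)))"
proof -
  have "v powr (r / 2 + real (i + j) * \<beta> - 1) = v powr (real (i + j) * \<beta> - 1) * v powr (r / 2)" for j
    by (simp add: powr_add[symmetric] algebra_simps)
  then show ?thesis
    using assms by (simp add: power_order_density_expansion cr_quantile_powr sum_distrib_left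
        sum_distrib_right mult_ac)
qed

lemma power_order_density_cr_quantile_moment:
  assumes \<beta>: "0 < \<beta>" and lam: "0 < lam" and i: "1 \<le> i" "i \<le> n"
    and r: "- 2 * real i * \<beta> < r" "r < 1"
  defines "g \<equiv> \<lambda>v. indicator {0<..<1} v * power_order_density \<beta> n i v * cr_quantile lam v powr r"
  shows "integrable lborel g"
    and "integral\<^sup>L lborel g = \<beta> * (lam * sqrt 2) powr r / Beta (real i) (real (n - i + 1))
        * (\<Sum>j = 0..n - i. (-1) ^ j * real ((n - i) choose j)
            * Beta (1 - r) (r / 2 + real (i + j) * \<beta>)
            * hyp2F1 (- r / 2) (r / 2 + real (i + j) * \<beta>) (1 - r / 2 + real (i + j) * \<beta>) (1 / 2))"
      (is "_ = ?moment")
proof -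
  define b where "b = (\<lambda>j::nat. r / 2 + real (i + j) * \<beta>)"
  define F where "F = (\<lambda>j v. indicator {0<..<1} v
    * (v powr (b j - 1) * (1 - v) powr ((1 - r) - 1) * (1 - 1 / 2 * v) powr (r / 2)))"
  define K where "K = (\<lambda>j. \<beta> * (lam * sqrt 2) powr r / Beta (real i) (real (n - i + 1))
    * ((-1) ^ j * real ((n - i) choose j)))"
  have "0 < b j" for j
  proof -
    have "real i * \<beta> \<le> real (i + j) * \<beta>"
      using \<beta> by (intro mult_right_mono) auto
    then show ?thesis
      using r(1) by (simp add: b_def)
  qed
  then have F_int: "integrable lborel (F j)"
    and F_integral: "integral\<^sup>L lborel (F j) = Beta (b j) (1 - r) * hyp2F1 (- (r / 2)) (b j) (1 - r + b j) (1 / 2)"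
    for j
    unfolding F_def using r by (intro hyp2F1_Euler_integral; simp)+
  have "g v = (\<Sum>j = 0..n - i. K j * F j v)" for v
    using power_order_density_cr_quantile_powr[OF lam i, of v \<beta> r]
    by (cases "v \<in> {0<..<1}") (simp_all add: g_def F_def K_def b_def sum_distrib_left mult_ac)
  then have g_eq: "g = (\<lambda>v. \<Sum>j = 0..n - i. K j * F j v)"
    by (rule ext)
  show "integrable lborel g"
    unfolding g_eq using F_int by simp
  show "integral\<^sup>L lborel g = ?moment"
    unfolding g_eq using F_int
    by (simp add: F_integral K_def b_def sum_distrib_left Beta_commute[of "1 - r"] algebra_simps)
qed

lemma ecr_order_distr_moment:
  assumes \<beta>: "0 < \<beta>" and lam: "0 < lam" and i: "1 \<le> i" "i \<le> n"
    and r: "- 2 * real i * \<beta> < r" "r < 1"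
  shows "integrable (ecr_order_distr \<beta> lam n i) (\<lambda>y. y powr r)"
    and "(\<integral>y. y powr r \<partial>ecr_order_distr \<beta> lam n i)
      = \<beta> * (lam * sqrt 2) powr r / Beta (real i) (real (n - i + 1))
        * (\<Sum>j = 0..n - i. (-1) ^ j * real ((n - i) choose j)
            * Beta (1 - r) (r / 2 + real (i + j) * \<beta>)
            * hyp2F1 (- r / 2) (r / 2 + real (i + j) * \<beta>) (1 - r / 2 + real (i + j) * \<beta>) (1 / 2))"
      (is "_ = ?moment")
proof -
  have nonneg: "AE v in lborel. 0 \<le> indicator {0<..<1} v * power_order_density \<beta> n i v"
    using power_order_density_nonneg[OF \<beta> i(1)] by (intro AE_I2) (simp add: indicator_def)
  note moment = power_order_density_cr_quantile_moment[OF \<beta> lam i r]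
  show "integrable (ecr_order_distr \<beta> lam n i) (\<lambda>y. y powr r)"
    using moment(1) unfolding ecr_order_distr_def
    by (subst integrable_distr_eq) (auto simp: integrable_density[OF _ _ nonneg])
  show "(\<integral>y. y powr r \<partial>ecr_order_distr \<beta> lam n i) = ?moment"
    using moment(2) unfolding ecr_order_distr_def
    by (subst integral_distr) (auto simp: integral_density[OF _ _ nonneg])
qed

theorem proposition8:
  fixes M :: "'a measure" and X :: "nat \<Rightarrow> 'a \<Rightarrow> real"
    and \<beta> lam r :: real and n i :: nat
  assumes "prob_space M"
    and "\<beta> > 0" and "lam > 0"
    and "1 \<le> i" and "i \<le> n"
    and "- 2 * real i * \<beta> < r" and "r < 1"
    and rv: "\<And>k. k \<in> {1..n} \<Longrightarrow> X k \<in> borel_measurable M"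
    and indep: "prob_space.indep_vars M (\<lambda>_. borel) X {1..n}"
    and cdf: "\<And>k x. k \<in> {1..n} \<Longrightarrow> measure M {\<omega> \<in> space M. X k \<omega> \<le> x} = ecr_cdf \<beta> lam x"
  shows "integrable M (\<lambda>\<omega>. order_stat n i (\<lambda>k. X k \<omega>) powr r)
    \<and> (\<integral>\<omega>. order_stat n i (\<lambda>k. X k \<omega>) powr r \<partial>M)
      = \<beta> * (lam * sqrt 2) powr r / Beta (real i) (real (n - i + 1))
        * (\<Sum>j = 0..n - i. (-1) ^ j * real ((n - i) choose j)
            * Beta (1 - r) (r / 2 + real (i + j) * \<beta>)
            * hyp2F1 (- r / 2) (r / 2 + real (i + j) * \<beta>) (1 - r / 2 + real (i + j) * \<beta>) (1 / 2))"
proof -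
  interpret prob_space M by fact
  define Y where "Y \<omega> = order_stat n i (\<lambda>k. X k \<omega>)" for \<omega>
  have [measurable]: "Y \<in> borel_measurable M"
    unfolding Y_def using assms(4,5) rv by (rule measurable_order_stat)
  have "cdf (distr M borel Y) t = cdf (ecr_order_distr \<beta> lam n i) t" for t
  proof -
    have "cdf (distr M borel Y) t = prob {\<omega> \<in> space M. order_stat n i (\<lambda>k. X k \<omega>) \<le> t}"
      by (simp add: cdf_def measure_distr Y_def vimage_def Int_def conj_commute)
    also have "\<dots> = binomial_tail n i (ecr_cdf \<beta> lam t)"
      using assms(4,5) indep cdf by (rule prob_order_stat_le)
    finally show ?thesis
      using assms by (simp add: cdf_ecr_order_distr)
  qed
  then have "distr M borel Y = ecr_order_distr \<beta> lam n i"
    using assms by (intro cdf_unique real_distribution_distr real_distribution_ecr_order_distr) auto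
  moreover have "integrable M (\<lambda>\<omega>. Y \<omega> powr r) \<longleftrightarrow> integrable (distr M borel Y) (\<lambda>y. y powr r)"
    by (rule integrable_distr_eq[symmetric]) measurable
  moreover have "(\<integral>\<omega>. Y \<omega> powr r \<partial>M) = (\<integral>y. y powr r \<partial>distr M borel Y)"
    by (rule integral_distr[symmetric]) measurable
  ultimately show ?thesis
    using ecr_order_distr_moment[OF assms(2-7)] by (simp add: Y_def)
qed

end
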